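(* The subgroup of Brunnian braids in $P_n$, namely $\bigcap_{i=1}^n Q_{\{i\}}$, is equal to the subgroup of $P_n$ generated by all monic commutators $x$ with $\sigma(x)=N=\{1,\dots,n\}$.
   Context: $P_n$ denotes the pure braid group on $n$ strands, generated by elements $p_{a,b}$ for $1\le a<b\le n$ subject to the relations: (A) $p_{a,b}p_{a,c}p_{b,c}=p_{a,c}p_{b,c}p_{a,b}=p_{b,c}p_{a,b}p_{a,c}$ for $1\le a<b<c\le n$; (B) $p_{a,b}p_{c,d}=p_{c,d}p_{a,b}$ and $p_{a,d}p_{b,c}=p_{b,c}p_{a,d}$ for $1\le a<b<c<d\le n$; (C) $p_{a,c}p_{b,c}^{-1}p_{b,d}p_{b,c}=p_{b,c}^{-1}p_{b,d}p_{b,c}p_{a,c}$ for $1\le a<b<c<d\le n$. Let $N=\{1,\dots,n\}$. For $S\subseteq N$: $P_S$ is the subgroup generated by the $p_{a,b}$ with $a,b\in S$; $Q_S$ is the subgroup generated by the $p_{a,b}$ with $a\in S$ or $b\in S$. A pure braid is Brunnian if deleting any single strand gives the trivial braid, i.e. it lies in $Q_{\{i\}}$ for every $i\in N$. Commutator convention: $[x,y]=x^{-1}y^{-1}xy$. Monic commutators are defined recursively: each $p_{a,b}$ and $p_{a,b}^{-1}$ ($1\le a<b\le n$) is a monic commutator; if $x,y$ are monic commutators and $[x,y]\neq1$, then $[x,y]$ is a monic commutator. The support $\sigma(x)$ of $x\in P_n$ is the intersection of all $S\subseteq N$ such that $x\in P_S$. *)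

theory Defs
  imports "HOL-Algebra.Group" "HOL-Algebra.Generated_Groups"
begin

text \<open>A letter is ((a,b), True) for p_{a,b} and
  ((a,b), False) for its inverse.\<close>

type_synonym pb_letter = "(nat \<times> nat) \<times> bool"
type_synonym pb_word = "pb_letter list"

definition pb_letters :: "nat \<Rightarrow> pb_letter set" where
  "pb_letters n = {((a,b),e). 1 \<le> a \<and> a < b \<and> b \<le> n}"

definition pb_words :: "nat \<Rightarrow> pb_word set" where
  "pb_words n = {w. set w \<subseteq> pb_letters n}"

fun inv_letter :: "pb_letter \<Rightarrow> pb_letter" where
  "inv_letter (g, e) = (g, \<not> e)"

definition pw :: "nat \<Rightarrow> nat \<Rightarrow> pb_word" where
  "pw a b = [((a,b), True)]"

definition pwi :: "nat \<Rightarrow> nat \<Rightarrow> pb_word" where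
  "pwi a b = [((a,b), False)]"

definition pb_rels :: "nat \<Rightarrow> (pb_word \<times> pb_word) set" where
  "pb_rels n =
     {(pw a b @ pw a c @ pw b c, pw a c @ pw b c @ pw a b) | a b c.
         1 \<le> a \<and> a < b \<and> b < c \<and> c \<le> n}
   \<union> {(pw a c @ pw b c @ pw a b, pw b c @ pw a b @ pw a c) | a b c.
         1 \<le> a \<and> a < b \<and> b < c \<and> c \<le> n}
   \<union> {(pw a b @ pw c d, pw c d @ pw a b) | a b c d.
         1 \<le> a \<and> a < b \<and> b < c \<and> c < d \<and> d \<le> n}
   \<union> {(pw a d @ pw b c, pw b c @ pw a d) | a b c d.
         1 \<le> a \<and> a < b \<and> b < c \<and> c < d \<and> d \<le> n}
   \<union> {(pw a c @ pwi b c @ pw b d @ pw b c, pwi b c @ pw b d @ pw b c @ pw a c) | a b c d.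
         1 \<le> a \<and> a < b \<and> b < c \<and> c < d \<and> d \<le> n}"

inductive pb_eq :: "nat \<Rightarrow> pb_word \<Rightarrow> pb_word \<Rightarrow> bool" for n where
  refl: "w \<in> pb_words n \<Longrightarrow> pb_eq n w w"
| sym: "pb_eq n u v \<Longrightarrow> pb_eq n v u"
| trans: "pb_eq n u v \<Longrightarrow> pb_eq n v w \<Longrightarrow> pb_eq n u w"
| cong: "pb_eq n u v \<Longrightarrow> x \<in> pb_words n \<Longrightarrow> y \<in> pb_words n \<Longrightarrow> pb_eq n (x @ u @ y) (x @ v @ y)"
| cancel: "l \<in> pb_letters n \<Longrightarrow> pb_eq n [l, inv_letter l] []"
| rel: "(u, v) \<in> pb_rels n \<Longrightarrow> pb_eq n u v"

definition pb_rel :: "nat \<Rightarrow> pb_word rel" where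
  "pb_rel n = {(u, v). pb_eq n u v}"

definition cls :: "nat \<Rightarrow> pb_word \<Rightarrow> pb_word set" where
  "cls n w = pb_rel n `` {w}"

definition PB :: "nat \<Rightarrow> pb_word set monoid" where
  "PB n = \<lparr> carrier = Equiv_Relations.quotient (pb_words n) (pb_rel n),
           monoid.mult = (\<lambda>A B. \<Union>u\<in>A. \<Union>v\<in>B. cls n (u @ v)),
           one = cls n [] \<rparr>"

definition pgen :: "nat \<Rightarrow> nat \<Rightarrow> nat \<Rightarrow> pb_word set" where
  "pgen n a b = cls n (pw a b)"

definition PS :: "nat \<Rightarrow> nat set \<Rightarrow> pb_word set set" where
  "PS n S = generate (PB n) {pgen n a b | a b. 1 \<le> a \<and> a < b \<and> b \<le> n \<and> a \<in> S \<and> b \<in> S}"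

definition QS :: "nat \<Rightarrow> nat set \<Rightarrow> pb_word set set" where
  "QS n S = generate (PB n) {pgen n a b | a b. 1 \<le> a \<and> a < b \<and> b \<le> n \<and> (a \<in> S \<or> b \<in> S)}"

definition commut :: "('a, 'b) monoid_scheme \<Rightarrow> 'a \<Rightarrow> 'a \<Rightarrow> 'a" where
  "commut G x y = inv\<^bsub>G\<^esub> x \<otimes>\<^bsub>G\<^esub> inv\<^bsub>G\<^esub> y \<otimes>\<^bsub>G\<^esub> x \<otimes>\<^bsub>G\<^esub> y"

inductive_set monic :: "nat \<Rightarrow> pb_word set set" for n where
  gen: "1 \<le> a \<Longrightarrow> a < b \<Longrightarrow> b \<le> n \<Longrightarrow> pgen n a b \<in> monic n"
| gen_inv: "1 \<le> a \<Longrightarrow> a < b \<Longrightarrow> b \<le> n \<Longrightarrow> inv\<^bsub>PB n\<^esub> (pgen n a b) \<in> monic n"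
| comm: "x \<in> monic n \<Longrightarrow> y \<in> monic n \<Longrightarrow> commut (PB n) x y \<noteq> \<one>\<^bsub>PB n\<^esub>
          \<Longrightarrow> commut (PB n) x y \<in> monic n"

definition supp :: "nat \<Rightarrow> pb_word set \<Rightarrow> nat set" where
  "supp n x = \<Inter> {S. S \<subseteq> {1..n} \<and> x \<in> PS n S}"

definition brunnian :: "nat \<Rightarrow> pb_word set set" where
  "brunnian n = {x \<in> carrier (PB n). \<forall>i\<in>{1..n}. x \<in> QS n {i}}"

end

theory Submission
  imports Defs "HOL-Algebra.SndIsomorphismGrp"
begin

text \<open>
  Deleting strand j is an endomorphism of P_n that kills Q_{j} and fixes P_{N-{j}}. The relations
  (A)-(C) show that every generator p_{c,d} conjugates the generators of Q_{j} back into Q_{j}, so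
  Q_{j} is normal; by induction on commutator depth, every monic commutator then lies either in
  Q_{j} or in P_{N-{j}}.

  Let M_T consist of the monic commutators lying in Q_{i} for all i in T. The subgroup generated
  by M_T is normal, because conjugating m by a monic y gives m [m, y]. By induction on T, the
  braids lying in Q_{i} for all i in T are exactly the products of elements of M_T: such a braid,
  being generated by M_{T-{j}}, factors as h p with h generated by M_T and p in P_{N-{j}}, and
  deleting strand j forces p = 1. Finally a monic commutator has full support if and only if it is
  nontrivial and lies in every Q_{i}.
\<close>

section \<open>Conjugation in groups\<close>

definition conjs :: "('a, 'b) monoid_scheme \<Rightarrow> 'a \<Rightarrow> 'a \<Rightarrow> 'a set" where
  "conjs G g x = {g \<otimes>\<^bsub>G\<^esub> x \<otimes>\<^bsub>G\<^esub> inv\<^bsub>G\<^esub> g, inv\<^bsub>G\<^esub> g \<otimes>\<^bsub>G\<^esub> x \<otimes>\<^bsub>G\<^esub> g}"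

text \<open>An elementwise normalizer, avoiding the coset machinery of the library's \<open>normalizer\<close>.\<close>

definition normalizing :: "('a, 'b) monoid_scheme \<Rightarrow> 'a set \<Rightarrow> 'a set" where
  "normalizing G H = {g \<in> carrier G. \<forall>x\<in>H. conjs G g x \<subseteq> H}"

definition cyclic_triple :: "('a, 'b) monoid_scheme \<Rightarrow> 'a \<Rightarrow> 'a \<Rightarrow> 'a \<Rightarrow> bool" where
  "cyclic_triple G x y z \<longleftrightarrow>
     x \<otimes>\<^bsub>G\<^esub> y \<otimes>\<^bsub>G\<^esub> z = y \<otimes>\<^bsub>G\<^esub> z \<otimes>\<^bsub>G\<^esub> x \<and> y \<otimes>\<^bsub>G\<^esub> z \<otimes>\<^bsub>G\<^esub> x = z \<otimes>\<^bsub>G\<^esub> x \<otimes>\<^bsub>G\<^esub> y"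

lemma cyclic_triple_rotate: "cyclic_triple G x y z \<Longrightarrow> cyclic_triple G y z x"
  by (auto simp: cyclic_triple_def)

context group
begin

lemma inv_mult_cancel_left [simp]: "x \<in> carrier G \<Longrightarrow> y \<in> carrier G \<Longrightarrow> inv x \<otimes> (x \<otimes> y) = y"
  by (simp add: m_assoc[symmetric])

lemma mult_inv_cancel_left [simp]: "x \<in> carrier G \<Longrightarrow> y \<in> carrier G \<Longrightarrow> x \<otimes> (inv x \<otimes> y) = y"
  by (simp add: m_assoc[symmetric])

lemma conjs_commuting:
  assumes "g \<in> carrier G" "x \<in> carrier G" "g \<otimes> x = x \<otimes> g"
  shows "conjs G g x = {x}"
proof -
  have "g \<otimes> x \<otimes> inv g = x \<otimes> g \<otimes> inv g" using assms(3) by simp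
  also have "\<dots> = x" using assms(1,2) by (simp add: m_assoc)
  finally have "g \<otimes> x \<otimes> inv g = x" .
  moreover have "inv g \<otimes> x \<otimes> g = inv g \<otimes> (g \<otimes> x)"
    using assms by (simp only: m_assoc inv_closed)
  moreover have "\<dots> = x" using assms(1,2) by simp
  ultimately show ?thesis by (simp add: conjs_def)
qed

lemma conjs_inv:
  assumes "g \<in> carrier G" "x \<in> carrier G"
  shows "conjs G g (inv x) = (\<lambda>y. inv y) ` conjs G g x"
  using assms by (simp add: conjs_def inv_mult_group m_assoc)

lemma conjs_inv_subset:
  assumes "subgroup H G" "g \<in> carrier G" "x \<in> carrier G" "conjs G g x \<subseteq> H"
  shows "conjs G g (inv x) \<subseteq> H"
  using assms by (auto simp: conjs_inv intro: subgroup.m_inv_closed)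

lemma subgroup_normalizing:
  assumes H: "subgroup H G"
  shows "subgroup (normalizing G H) G"
proof (rule subgroupI)
  show "normalizing G H \<subseteq> carrier G" by (auto simp: normalizing_def)
  have "conjs G \<one> x = {x}" if "x \<in> H" for x
    using that subgroup.mem_carrier[OF H] by (simp add: conjs_def)
  then show "normalizing G H \<noteq> {}"
    by (auto simp: normalizing_def intro!: exI[of _ \<one>])
next
  fix g assume "g \<in> normalizing G H"
  then show "inv g \<in> normalizing G H"
    by (auto simp: normalizing_def conjs_def)
next
  fix g h assume g: "g \<in> normalizing G H" and h: "h \<in> normalizing G H"
  have "conjs G (g \<otimes> h) x \<subseteq> H" if x: "x \<in> H" for x
  proof -
    have "h \<otimes> x \<otimes> inv h \<in> H" "inv h \<otimes> x \<otimes> h \<in> H"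
      using h x by (auto simp: normalizing_def conjs_def)
    then have "g \<otimes> (h \<otimes> x \<otimes> inv h) \<otimes> inv g \<in> H" "inv h \<otimes> (inv g \<otimes> x \<otimes> g) \<otimes> h \<in> H"
      using g h x by (auto simp: normalizing_def conjs_def)
    moreover have "g \<in> carrier G" "h \<in> carrier G" "x \<in> carrier G"
      using g h x subgroup.mem_carrier[OF H] by (auto simp: normalizing_def)
    ultimately show ?thesis
      by (simp add: conjs_def inv_mult_group m_assoc)
  qed
  with g h show "g \<otimes> h \<in> normalizing G H"
    by (auto simp: normalizing_def)
qed

lemma subgroup_subset_normalizing: "subgroup H G \<Longrightarrow> H \<subseteq> normalizing G H"
  by (auto simp: normalizing_def conjs_def intro!: subgroup.m_closed subgroup.m_inv_closed
      dest: subgroup.mem_carrier)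

lemma conj_in_generate:
  assumes S: "S \<subseteq> carrier G" and g: "g \<in> carrier G"
    and gen: "\<And>s. s \<in> S \<Longrightarrow> g \<otimes> s \<otimes> inv g \<in> generate G S"
    and x: "x \<in> generate G S"
  shows "g \<otimes> x \<otimes> inv g \<in> generate G S"
  using x
proof (induction rule: generate.induct)
  case one
  then show ?case using g generate.one by simp
next
  case (incl s)
  then show ?case by (rule gen)
next
  case (inv s)
  then have "s \<in> carrier G" using S by blast
  then have "g \<otimes> inv s \<otimes> inv g = inv (g \<otimes> s \<otimes> inv g)"
    using g by (simp add: inv_mult_group m_assoc)
  then show ?case
    using generate_m_inv_closed[OF S gen[OF inv]] by simp
next
  case (eng x y)
  then have "x \<in> carrier G" "y \<in> carrier G"
    using generate_in_carrier[OF S] by auto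
  then have "g \<otimes> (x \<otimes> y) \<otimes> inv g = (g \<otimes> x \<otimes> inv g) \<otimes> (g \<otimes> y \<otimes> inv g)"
    using g by (simp add: m_assoc)
  with eng show ?case by (simp add: generate.eng)
qed

lemma normalizing_generateI:
  assumes S: "S \<subseteq> carrier G" and g: "g \<in> carrier G"
    and gen: "\<And>s. s \<in> S \<Longrightarrow> conjs G g s \<subseteq> generate G S"
  shows "g \<in> normalizing G (generate G S)"
proof -
  have "g \<otimes> x \<otimes> inv g \<in> generate G S" if "x \<in> generate G S" for x
    using gen by (intro conj_in_generate[OF S g _ that]) (auto simp: conjs_def)
  moreover have "inv g \<otimes> x \<otimes> inv (inv g) \<in> generate G S" if "x \<in> generate G S" for x
    using gen g by (intro conj_in_generate[OF S _ _ that]) (auto simp: conjs_def)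
  ultimately show ?thesis
    using g by (simp add: normalizing_def conjs_def)
qed

lemma normal_if_generators_normalizing:
  assumes H: "subgroup H G" and T: "T \<subseteq> normalizing G H" and gen: "generate G T = carrier G"
  shows "H \<lhd> G"
proof -
  have "carrier G \<subseteq> normalizing G H"
    using generate_subgroup_incl[OF T subgroup_normalizing[OF H]] gen by simp
  then have "g \<otimes> h \<otimes> inv g \<in> H" if "g \<in> carrier G" "h \<in> H" for g h
    using that by (auto simp: normalizing_def conjs_def)
  with H show ?thesis by (simp add: normal_inv_iff)
qed

lemma generate_insert_one:
  assumes "S \<subseteq> carrier G"
  shows "generate G (insert \<one> S) = generate G S"
proof
  show "generate G (insert \<one> S) \<subseteq> generate G S"
    using generate.one generate.incl
    by (intro generate_subgroup_incl generate_is_subgroup[OF assms]) auto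
  show "generate G S \<subseteq> generate G (insert \<one> S)"
    by (rule mono_generate) blast
qed

lemma commut_closed [simp]: "x \<in> carrier G \<Longrightarrow> y \<in> carrier G \<Longrightarrow> commut G x y \<in> carrier G"
  by (simp add: commut_def)

lemma inv_commut: "x \<in> carrier G \<Longrightarrow> y \<in> carrier G \<Longrightarrow> inv (commut G x y) = commut G y x"
  by (simp add: commut_def inv_mult_group m_assoc)

lemma inv_conj_eq_mult_commut:
  "x \<in> carrier G \<Longrightarrow> y \<in> carrier G \<Longrightarrow> inv y \<otimes> x \<otimes> y = x \<otimes> commut G x y"
  by (simp add: commut_def m_assoc)

lemma commut_in_subgroup: "subgroup H G \<Longrightarrow> x \<in> H \<Longrightarrow> y \<in> H \<Longrightarrow> commut G x y \<in> H"
  by (simp add: commut_def subgroup.m_closed subgroup.m_inv_closed)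

lemma commut_in_normal:
  assumes N: "N \<lhd> G" and xy: "x \<in> carrier G" "y \<in> carrier G" "x \<in> N \<or> y \<in> N"
  shows "commut G x y \<in> N"
  using xy(3)
proof
  assume "x \<in> N"
  then have "inv x \<otimes> (inv y \<otimes> x \<otimes> y) \<in> N"
    using N xy by (simp add: normal.inv_op_closed1 normal_imp_subgroup subgroup.m_closed
        subgroup.m_inv_closed)
  with xy show ?thesis by (simp add: commut_def m_assoc)
next
  assume "y \<in> N"
  then show ?thesis
    using N xy by (simp add: commut_def normal.inv_op_closed1 normal_imp_subgroup subgroup.m_closed
        subgroup.m_inv_closed)
qed

lemma cyclic_triple_conjs:
  assumes xyz: "cyclic_triple G x y z" and carrier: "x \<in> carrier G" "y \<in> carrier G" "z \<in> carrier G"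
    and H: "subgroup H G" "x \<in> H" "y \<in> H"
  shows "conjs G z x \<subseteq> H" "conjs G z y \<subseteq> H"
proof -
  have rot1: "x \<otimes> y \<otimes> z = y \<otimes> z \<otimes> x" and rot2: "y \<otimes> z \<otimes> x = z \<otimes> x \<otimes> y"
    using xyz by (auto simp: cyclic_triple_def)
  have "inv z \<otimes> y \<otimes> z = inv z \<otimes> (y \<otimes> z \<otimes> x) \<otimes> inv x"
    using carrier by (simp add: m_assoc)
  also have "\<dots> = x \<otimes> y \<otimes> inv x"
    using carrier by (simp add: rot2 m_assoc)
  finally have zy: "inv z \<otimes> y \<otimes> z \<in> H"
    using H by (simp add: subgroup.m_closed subgroup.m_inv_closed)
  have "z \<otimes> x \<otimes> inv z = inv y \<otimes> (y \<otimes> z \<otimes> x) \<otimes> inv z"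
    using carrier by (simp add: m_assoc)
  also have "\<dots> = inv y \<otimes> x \<otimes> y"
    using carrier by (simp add: rot1[symmetric] m_assoc)
  finally have zx: "z \<otimes> x \<otimes> inv z \<in> H"
    using H by (simp add: subgroup.m_closed subgroup.m_inv_closed)
  \<comment> \<open>\<open>z\<close> commutes with \<open>x \<otimes> y\<close>, so the remaining conjugates are products of known ones\<close>
  have "conjs G z (x \<otimes> y) = {x \<otimes> y}"
    using carrier rot1 rot2 by (intro conjs_commuting) (simp_all add: m_assoc)
  then have xy: "inv z \<otimes> (x \<otimes> y) \<otimes> z = x \<otimes> y" "z \<otimes> (x \<otimes> y) \<otimes> inv z = x \<otimes> y"
    by (auto simp: conjs_def)
  have "inv z \<otimes> x \<otimes> z = (inv z \<otimes> (x \<otimes> y) \<otimes> z) \<otimes> inv (inv z \<otimes> y \<otimes> z)"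
    using carrier by (simp add: m_assoc inv_mult_group)
  then have "inv z \<otimes> x \<otimes> z \<in> H"
    using H zy by (simp add: xy subgroup.m_closed subgroup.m_inv_closed)
  moreover have "z \<otimes> y \<otimes> inv z = inv (z \<otimes> x \<otimes> inv z) \<otimes> (z \<otimes> (x \<otimes> y) \<otimes> inv z)"
    using carrier by (simp add: m_assoc inv_mult_group)
  then have "z \<otimes> y \<otimes> inv z \<in> H"
    using H zx by (simp add: xy subgroup.m_closed subgroup.m_inv_closed)
  ultimately show "conjs G z x \<subseteq> H" "conjs G z y \<subseteq> H"
    using zx zy by (auto simp: conjs_def)
qed

lemma conjs_conj_subset:
  assumes H: "subgroup H G" and carrier: "g \<in> carrier G" "c \<in> carrier G"
    and b: "b \<in> H" "g \<otimes> b = b \<otimes> g" and c: "conjs G g c \<subseteq> normalizing G H"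
  shows "conjs G g (inv c \<otimes> b \<otimes> c) \<subseteq> H"
proof -
  have b_carrier: "b \<in> carrier G" using H b by (simp add: subgroup.mem_carrier)
  have conj_eq: "h \<otimes> (inv c \<otimes> b \<otimes> c) \<otimes> inv h
      = inv (h \<otimes> c \<otimes> inv h) \<otimes> (h \<otimes> b \<otimes> inv h) \<otimes> (h \<otimes> c \<otimes> inv h)"
    if "h \<in> carrier G" for h
    using that carrier b_carrier by (simp add: m_assoc inv_mult_group)
  have "conjs G g b = {b}" using carrier b_carrier b by (simp add: conjs_commuting)
  then have fix_b: "g \<otimes> b \<otimes> inv g = b" "inv g \<otimes> b \<otimes> inv (inv g) = b"
    using carrier by (auto simp: conjs_def)
  have "inv k \<otimes> b \<otimes> k \<in> H" if "k \<in> conjs G g c" for k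
    using that c b by (auto simp: normalizing_def conjs_def)
  then show ?thesis
    using conj_eq[of g] conj_eq[of "inv g"] fix_b carrier by (auto simp: conjs_def)
qed

text \<open>
  For strands a < b < c < d, the elements A, B, C, D, E, F stand for p_{a,b}, p_{a,c}, p_{b,c},
  p_{a,d}, p_{b,d}, p_{c,d}, and the assumptions are the instances of relations (A), (B), (C) among
  them.
\<close>

context
  fixes A B C D E F
  assumes carrier: "A \<in> carrier G" "B \<in> carrier G" "C \<in> carrier G"
    "D \<in> carrier G" "E \<in> carrier G" "F \<in> carrier G"
    and ABC: "cyclic_triple G A B C" and ADE: "cyclic_triple G A D E"
    and BDF: "cyclic_triple G B D F" and CEF: "cyclic_triple G C E F"
    and AF: "A \<otimes> F = F \<otimes> A" and DC: "D \<otimes> C = C \<otimes> D"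
    and B_CEC: "B \<otimes> (inv C \<otimes> E \<otimes> C) = (inv C \<otimes> E \<otimes> C) \<otimes> B"
begin

lemma E_commutes_CBC: "E \<otimes> (C \<otimes> B \<otimes> inv C) = (C \<otimes> B \<otimes> inv C) \<otimes> E"
proof -
  have "(C \<otimes> B \<otimes> inv C) \<otimes> E = C \<otimes> (B \<otimes> (inv C \<otimes> E \<otimes> C)) \<otimes> inv C"
    using carrier by (simp add: m_assoc)
  also have "\<dots> = C \<otimes> ((inv C \<otimes> E \<otimes> C) \<otimes> B) \<otimes> inv C"
    by (simp only: B_CEC)
  also have "\<dots> = E \<otimes> (C \<otimes> B \<otimes> inv C)"
    using carrier by (simp add: m_assoc)
  finally show ?thesis by simp
qed

lemma interleaved_strand_c:
  assumes H: "subgroup H G" and in_H: "B \<in> H" "C \<in> H" "F \<in> H"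
  shows "conjs G E B \<subseteq> H"
proof -
  have "conjs G E C \<subseteq> H"
    using cyclic_triple_conjs(2)[OF cyclic_triple_rotate[OF cyclic_triple_rotate[OF CEF]]]
      carrier H in_H by simp
  then have "conjs G E C \<subseteq> normalizing G H"
    using subgroup_subset_normalizing[OF H] by blast
  moreover have "C \<otimes> B \<otimes> inv C \<in> H"
    using H in_H by (simp add: subgroup.m_closed subgroup.m_inv_closed)
  ultimately have "conjs G E (inv C \<otimes> (C \<otimes> B \<otimes> inv C) \<otimes> C) \<subseteq> H"
    using carrier E_commutes_CBC by (intro conjs_conj_subset[OF H]) simp_all
  then show ?thesis using carrier by (simp add: m_assoc)
qed

lemma interleaved_strand_b:
  assumes H: "subgroup H G" and in_H: "A \<in> H" "C \<in> H" "E \<in> H"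
  shows "conjs G B E \<subseteq> H"
proof -
  have "conjs G B C \<subseteq> H"
    using cyclic_triple_conjs(1)[OF cyclic_triple_rotate[OF cyclic_triple_rotate[OF ABC]]]
      carrier H in_H by simp
  then have "conjs G B (inv C) \<subseteq> normalizing G H"
    using conjs_inv_subset[OF H] subgroup_subset_normalizing[OF H] carrier by blast
  moreover have "inv C \<otimes> E \<otimes> C \<in> H"
    using H in_H by (simp add: subgroup.m_closed subgroup.m_inv_closed)
  ultimately have "conjs G B (inv (inv C) \<otimes> (inv C \<otimes> E \<otimes> C) \<otimes> inv C) \<subseteq> H"
    using carrier B_CEC by (intro conjs_conj_subset[OF H]) simp_all
  then show ?thesis using carrier by (simp add: m_assoc)
qed

lemma interleaved_strand_a:
  assumes H: "subgroup H G" and in_H: "A \<in> H" "B \<in> H" "D \<in> H"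
  shows "conjs G E B \<subseteq> H"
proof -
  \<comment> \<open>C and F need not normalize H, but they normalize the subgroup generated by A, B, D\<close>
  define H0 where "H0 = generate G {A, B, D}"
  have gens: "{A, B, D} \<subseteq> carrier G" using carrier by simp
  have H0: "subgroup H0 G" unfolding H0_def by (rule generate_is_subgroup[OF gens])
  have in_H0: "A \<in> H0" "B \<in> H0" "D \<in> H0" unfolding H0_def by (auto intro: generate.incl)
  have C: "C \<in> normalizing G H0"
    unfolding H0_def
  proof (rule normalizing_generateI[OF gens carrier(3)])
    fix s assume "s \<in> {A, B, D}"
    then show "conjs G C s \<subseteq> generate G {A, B, D}"
      using cyclic_triple_conjs[OF ABC carrier(1-3) H0 in_H0(1,2)] in_H0 carrier DC
      by (auto simp: H0_def conjs_commuting)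
  qed
  have F: "F \<in> normalizing G H0"
    unfolding H0_def
  proof (rule normalizing_generateI[OF gens carrier(6)])
    fix s assume "s \<in> {A, B, D}"
    then show "conjs G F s \<subseteq> generate G {A, B, D}"
      using cyclic_triple_conjs[OF BDF carrier(2,4,6) H0 in_H0(2,3)] in_H0 carrier AF
      by (auto simp: H0_def conjs_commuting)
  qed
  have "conjs G E C \<subseteq> normalizing G H0"
    using cyclic_triple_conjs(2)[OF cyclic_triple_rotate[OF cyclic_triple_rotate[OF CEF]]]
      subgroup_normalizing[OF H0] carrier C F
    by simp
  moreover have "C \<otimes> B \<otimes> inv C \<in> H0"
    using C in_H0 by (auto simp: normalizing_def conjs_def)
  ultimately have "conjs G E (inv C \<otimes> (C \<otimes> B \<otimes> inv C) \<otimes> C) \<subseteq> H0"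
    using carrier E_commutes_CBC by (intro conjs_conj_subset[OF H0]) simp_all
  moreover have "H0 \<subseteq> H"
    unfolding H0_def using H in_H by (intro generate_subgroup_incl) auto
  ultimately show ?thesis using carrier by (simp add: m_assoc)
qed

lemma interleaved_strand_d:
  assumes H: "subgroup H G" and in_H: "D \<in> H" "E \<in> H" "F \<in> H"
  shows "conjs G B E \<subseteq> H"
proof -
  \<comment> \<open>likewise, A and C normalize the subgroup generated by D, E, F\<close>
  define H0 where "H0 = generate G {D, E, F}"
  have gens: "{D, E, F} \<subseteq> carrier G" using carrier by simp
  have H0: "subgroup H0 G" unfolding H0_def by (rule generate_is_subgroup[OF gens])
  have in_H0: "D \<in> H0" "E \<in> H0" "F \<in> H0" unfolding H0_def by (auto intro: generate.incl)
  have "A \<in> normalizing G H0"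
    unfolding H0_def
  proof (rule normalizing_generateI[OF gens carrier(1)])
    fix s assume "s \<in> {D, E, F}"
    then show "conjs G A s \<subseteq> generate G {D, E, F}"
      using cyclic_triple_conjs[OF cyclic_triple_rotate[OF ADE] carrier(4,5,1) H0 in_H0(1,2)]
        in_H0 carrier AF
      by (auto simp: H0_def conjs_commuting)
  qed
  moreover have C: "C \<in> normalizing G H0"
    unfolding H0_def
  proof (rule normalizing_generateI[OF gens carrier(3)])
    fix s assume "s \<in> {D, E, F}"
    then show "conjs G C s \<subseteq> generate G {D, E, F}"
      using cyclic_triple_conjs[OF cyclic_triple_rotate[OF CEF] carrier(5,6,3) H0 in_H0(2,3)]
        in_H0 carrier DC
      by (auto simp: H0_def conjs_commuting)
  qed
  ultimately have "conjs G B C \<subseteq> normalizing G H0"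
    using cyclic_triple_conjs(1)[OF cyclic_triple_rotate[OF cyclic_triple_rotate[OF ABC]]]
      subgroup_normalizing[OF H0] carrier
    by simp
  then have "conjs G B (inv C) \<subseteq> normalizing G H0"
    using conjs_inv_subset subgroup_normalizing[OF H0] carrier by blast
  moreover have "inv C \<otimes> E \<otimes> C \<in> H0"
    using C in_H0 by (auto simp: normalizing_def conjs_def)
  ultimately have "conjs G B (inv (inv C) \<otimes> (inv C \<otimes> E \<otimes> C) \<otimes> inv C) \<subseteq> H0"
    using carrier B_CEC by (intro conjs_conj_subset[OF H0]) simp_all
  moreover have "H0 \<subseteq> H"
    unfolding H0_def using H in_H by (intro generate_subgroup_incl) auto
  ultimately show ?thesis using carrier by (simp add: m_assoc)
qed

end

end


section \<open>The pure braid group as a quotient of words\<close>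

lemma pw_in_words: "1 \<le> a \<Longrightarrow> a < b \<Longrightarrow> b \<le> n \<Longrightarrow> pw a b \<in> pb_words n"
  by (simp add: pw_def pb_words_def pb_letters_def)

lemma pwi_in_words: "1 \<le> a \<Longrightarrow> a < b \<Longrightarrow> b \<le> n \<Longrightarrow> pwi a b \<in> pb_words n"
  by (simp add: pwi_def pb_words_def pb_letters_def)

lemma append_in_words [simp]: "u @ v \<in> pb_words n \<longleftrightarrow> u \<in> pb_words n \<and> v \<in> pb_words n"
  by (auto simp: pb_words_def)

lemma Cons_in_words [simp]: "l # v \<in> pb_words n \<longleftrightarrow> l \<in> pb_letters n \<and> v \<in> pb_words n"
  by (auto simp: pb_words_def)

lemma Nil_in_words [simp]: "[] \<in> pb_words n"
  by (simp add: pb_words_def)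

lemma inv_letter_in_letters [simp]: "inv_letter l \<in> pb_letters n \<longleftrightarrow> l \<in> pb_letters n"
  by (cases l) (auto simp: pb_letters_def)

lemma inv_letter_inv_letter [simp]: "inv_letter (inv_letter l) = l"
  by (cases l) auto

lemma pb_rels_in_words: "(u, v) \<in> pb_rels n \<Longrightarrow> u \<in> pb_words n \<and> v \<in> pb_words n"
  unfolding pb_rels_def by (auto simp: pw_in_words pwi_in_words)

lemma pb_eq_in_words: "pb_eq n u v \<Longrightarrow> u \<in> pb_words n \<and> v \<in> pb_words n"
  by (induction rule: pb_eq.induct) (auto dest: pb_rels_in_words)

lemma pb_eq_append:
  assumes "pb_eq n u v" "pb_eq n u' v'"
  shows "pb_eq n (u @ u') (v @ v')"
proof -
  have words: "u' \<in> pb_words n" "v \<in> pb_words n"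
    using assms pb_eq_in_words by blast+
  have "pb_eq n ([] @ u @ u') ([] @ v @ u')"
    using assms(1) words by (intro pb_eq.cong) auto
  moreover have "pb_eq n (v @ u' @ []) (v @ v' @ [])"
    using assms(2) words by (intro pb_eq.cong) auto
  ultimately show ?thesis by (auto intro: pb_eq.trans)
qed

lemma in_cls_iff: "v \<in> cls n u \<longleftrightarrow> pb_eq n u v"
  by (simp add: cls_def pb_rel_def)

lemma cls_eqI: "pb_eq n u v \<Longrightarrow> cls n u = cls n v"
  unfolding cls_def pb_rel_def by (auto intro: pb_eq.trans pb_eq.sym)

lemma carrier_PB: "carrier (PB n) = {cls n w | w. w \<in> pb_words n}"
  by (auto simp: PB_def quotient_def cls_def)

lemma cls_in_carrier: "w \<in> pb_words n \<Longrightarrow> cls n w \<in> carrier (PB n)"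
  unfolding carrier_PB by blast

lemma one_PB: "\<one>\<^bsub>PB n\<^esub> = cls n []"
  by (simp add: PB_def)

lemma mult_cls:
  assumes "u \<in> pb_words n" "v \<in> pb_words n"
  shows "cls n u \<otimes>\<^bsub>PB n\<^esub> cls n v = cls n (u @ v)"
proof -
  have "cls n (u' @ v') = cls n (u @ v)" if "u' \<in> cls n u" "v' \<in> cls n v" for u' v'
    using that by (metis cls_eqI in_cls_iff pb_eq_append)
  moreover have "u \<in> cls n u" "v \<in> cls n v"
    using assms by (auto simp: in_cls_iff intro: pb_eq.refl)
  ultimately have "(\<Union>u'\<in>cls n u. \<Union>v'\<in>cls n v. cls n (u' @ v')) = cls n (u @ v)"
    by blast
  then show ?thesis by (simp add: PB_def)
qed

definition inv_word :: "pb_word \<Rightarrow> pb_word" where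
  "inv_word w = rev (map inv_letter w)"

lemma inv_word_in_words: "w \<in> pb_words n \<Longrightarrow> inv_word w \<in> pb_words n"
  by (induction w) (auto simp: inv_word_def)

lemma pb_eq_inv_word_append: "w \<in> pb_words n \<Longrightarrow> pb_eq n (inv_word w @ w) []"
proof (induction w)
  case Nil
  then show ?case by (simp add: inv_word_def pb_eq.refl)
next
  case (Cons l w)
  then have l: "l \<in> pb_letters n" and w: "w \<in> pb_words n" by auto
  have "pb_eq n [inv_letter l, l] []"
    using pb_eq.cancel[of "inv_letter l" n] l by simp
  then have "pb_eq n (inv_word w @ [inv_letter l, l] @ w) (inv_word w @ [] @ w)"
    using w inv_word_in_words by (intro pb_eq.cong) auto
  then have "pb_eq n (inv_word (l # w) @ l # w) (inv_word w @ w)"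
    by (simp add: inv_word_def)
  with Cons.IH[OF w] show ?case by (blast intro: pb_eq.trans)
qed

lemma group_PB: "group (PB n)"
proof (rule groupI)
  fix x y assume "x \<in> carrier (PB n)" "y \<in> carrier (PB n)"
  then show "x \<otimes>\<^bsub>PB n\<^esub> y \<in> carrier (PB n)"
    by (auto simp: carrier_PB mult_cls cls_in_carrier)
next
  show "\<one>\<^bsub>PB n\<^esub> \<in> carrier (PB n)" by (simp add: one_PB cls_in_carrier)
next
  fix x y z assume "x \<in> carrier (PB n)" "y \<in> carrier (PB n)" "z \<in> carrier (PB n)"
  then show "x \<otimes>\<^bsub>PB n\<^esub> y \<otimes>\<^bsub>PB n\<^esub> z = x \<otimes>\<^bsub>PB n\<^esub> (y \<otimes>\<^bsub>PB n\<^esub> z)"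
    by (auto simp: carrier_PB mult_cls)
next
  fix x assume "x \<in> carrier (PB n)"
  then show "\<one>\<^bsub>PB n\<^esub> \<otimes>\<^bsub>PB n\<^esub> x = x"
    by (auto simp: carrier_PB one_PB mult_cls)
next
  fix x assume "x \<in> carrier (PB n)"
  then obtain w where x: "x = cls n w" and w: "w \<in> pb_words n"
    by (auto simp: carrier_PB)
  then have "cls n (inv_word w) \<otimes>\<^bsub>PB n\<^esub> x = \<one>\<^bsub>PB n\<^esub>"
    by (simp add: mult_cls inv_word_in_words one_PB cls_eqI pb_eq_inv_word_append)
  then show "\<exists>y\<in>carrier (PB n). y \<otimes>\<^bsub>PB n\<^esub> x = \<one>\<^bsub>PB n\<^esub>"
    using w inv_word_in_words cls_in_carrier by blast
qed

lemma pgen_in_carrier: "1 \<le> a \<Longrightarrow> a < b \<Longrightarrow> b \<le> n \<Longrightarrow> pgen n a b \<in> carrier (PB n)"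
  by (simp add: pgen_def cls_in_carrier pw_in_words)

lemma pb_eq_pwi_pw: "1 \<le> a \<Longrightarrow> a < b \<Longrightarrow> b \<le> n \<Longrightarrow> pb_eq n (pwi a b @ pw a b) []"
  using pb_eq.cancel[of "((a, b), False)" n] by (simp add: pb_letters_def pwi_def pw_def)

lemma inv_pgen:
  assumes "1 \<le> a" "a < b" "b \<le> n"
  shows "inv\<^bsub>PB n\<^esub> (pgen n a b) = cls n (pwi a b)"
proof -
  interpret group "PB n" by (rule group_PB)
  have "cls n (pwi a b) \<otimes>\<^bsub>PB n\<^esub> pgen n a b = \<one>\<^bsub>PB n\<^esub>"
    using assms pb_eq_pwi_pw
    by (simp add: pgen_def mult_cls pw_in_words pwi_in_words one_PB cls_eqI)
  then show ?thesis
    using inv_equality assms pgen_in_carrier cls_in_carrier pwi_in_words by blast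
qed

lemma cls_rel: "(u, v) \<in> pb_rels n \<Longrightarrow> cls n u = cls n v"
  by (rule cls_eqI[OF pb_eq.rel])

lemma pgen_cyclic_triple:
  assumes "1 \<le> a" "a < b" "b < c" "c \<le> n"
  shows "cyclic_triple (PB n) (pgen n a b) (pgen n a c) (pgen n b c)"
proof -
  have "(pw a b @ pw a c @ pw b c, pw a c @ pw b c @ pw a b) \<in> pb_rels n"
    "(pw a c @ pw b c @ pw a b, pw b c @ pw a b @ pw a c) \<in> pb_rels n"
    unfolding pb_rels_def using assms by blast+
  then show ?thesis
    using assms by (simp add: cyclic_triple_def pgen_def mult_cls pw_in_words cls_rel)
qed

lemma pgen_commute_disjoint:
  assumes "1 \<le> a" "a < b" "b < c" "c < d" "d \<le> n"
  shows "pgen n a b \<otimes>\<^bsub>PB n\<^esub> pgen n c d = pgen n c d \<otimes>\<^bsub>PB n\<^esub> pgen n a b"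
proof -
  have "(pw a b @ pw c d, pw c d @ pw a b) \<in> pb_rels n"
    unfolding pb_rels_def using assms by blast
  then show ?thesis
    using assms by (simp add: pgen_def mult_cls pw_in_words cls_rel)
qed

lemma pgen_commute_nested:
  assumes "1 \<le> a" "a < b" "b < c" "c < d" "d \<le> n"
  shows "pgen n a d \<otimes>\<^bsub>PB n\<^esub> pgen n b c = pgen n b c \<otimes>\<^bsub>PB n\<^esub> pgen n a d"
proof -
  have "(pw a d @ pw b c, pw b c @ pw a d) \<in> pb_rels n"
    unfolding pb_rels_def using assms by blast
  then show ?thesis
    using assms by (simp add: pgen_def mult_cls pw_in_words cls_rel)
qed

lemma pgen_relation_C:
  assumes "1 \<le> a" "a < b" "b < c" "c < d" "d \<le> n"
  defines "y \<equiv> inv\<^bsub>PB n\<^esub> (pgen n b c) \<otimes>\<^bsub>PB n\<^esub> pgen n b d \<otimes>\<^bsub>PB n\<^esub> pgen n b c"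
  shows "pgen n a c \<otimes>\<^bsub>PB n\<^esub> y = y \<otimes>\<^bsub>PB n\<^esub> pgen n a c"
proof -
  have "(pw a c @ pwi b c @ pw b d @ pw b c, pwi b c @ pw b d @ pw b c @ pw a c) \<in> pb_rels n"
    unfolding pb_rels_def using assms by blast
  moreover have "inv\<^bsub>PB n\<^esub> (pgen n b c) = cls n (pwi b c)"
    using assms by (simp add: inv_pgen)
  ultimately show ?thesis
    using assms(1-5) by (simp add: y_def pgen_def mult_cls pw_in_words pwi_in_words cls_rel)
qed

definition gens :: "nat \<Rightarrow> pb_word set set" where
  "gens n = {pgen n a b | a b. 1 \<le> a \<and> a < b \<and> b \<le> n}"

lemma gens_subset_carrier: "gens n \<subseteq> carrier (PB n)"
  by (auto simp: gens_def pgen_in_carrier)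

lemma generate_gens: "generate (PB n) (gens n) = carrier (PB n)"
proof
  interpret group "PB n" by (rule group_PB)
  show "generate (PB n) (gens n) \<subseteq> carrier (PB n)"
    by (rule generate_incl[OF gens_subset_carrier])
  have letter: "cls n [l] \<in> generate (PB n) (gens n)" if "l \<in> pb_letters n" for l
  proof -
    obtain a b e where l: "l = ((a, b), e)" by (metis prod.collapse)
    with that have ab: "1 \<le> a" "a < b" "b \<le> n" by (auto simp: pb_letters_def)
    then have "pgen n a b \<in> gens n" by (auto simp: gens_def)
    moreover have "cls n [l] = (if e then pgen n a b else inv\<^bsub>PB n\<^esub> (pgen n a b))"
      using inv_pgen[OF ab] by (simp add: l pgen_def pw_def pwi_def)
    ultimately show ?thesis by (auto intro: generate.incl generate.inv)
  qed
  have "cls n w \<in> generate (PB n) (gens n)" if "w \<in> pb_words n" for w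
    using that
  proof (induction w)
    case Nil
    show ?case using generate.one[of "PB n"] by (simp add: one_PB)
  next
    case (Cons l w)
    then have "cls n (l # w) = cls n [l] \<otimes>\<^bsub>PB n\<^esub> cls n w"
      by (simp add: mult_cls)
    moreover have "cls n [l] \<in> generate (PB n) (gens n)"
      using Cons.prems letter by simp
    ultimately show ?case using Cons by (auto intro: generate.eng)
  qed
  then show "carrier (PB n) \<subseteq> generate (PB n) (gens n)"
    by (auto simp: carrier_PB)
qed

lemma subgroup_PS: "subgroup (PS n S) (PB n)"
  unfolding PS_def by (rule group.generate_is_subgroup[OF group_PB]) (auto intro: pgen_in_carrier)

lemma subgroup_QS: "subgroup (QS n S) (PB n)"
  unfolding QS_def by (rule group.generate_is_subgroup[OF group_PB]) (auto intro: pgen_in_carrier)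

lemma pgen_in_PS: "1 \<le> a \<Longrightarrow> a < b \<Longrightarrow> b \<le> n \<Longrightarrow> a \<in> S \<Longrightarrow> b \<in> S \<Longrightarrow> pgen n a b \<in> PS n S"
  unfolding PS_def by (rule generate.incl) blast

lemma pgen_in_QS: "1 \<le> a \<Longrightarrow> a < b \<Longrightarrow> b \<le> n \<Longrightarrow> j \<in> {a, b} \<Longrightarrow> pgen n a b \<in> QS n {j}"
  unfolding QS_def by (rule generate.incl) blast

lemma PS_mono: "S \<subseteq> T \<Longrightarrow> PS n S \<subseteq> PS n T"
  unfolding PS_def by (rule group.mono_generate[OF group_PB]) blast

lemma PS_all: "PS n {1..n} = carrier (PB n)"
proof -
  have "{pgen n a b |a b. 1 \<le> a \<and> a < b \<and> b \<le> n \<and> a \<in> {1..n} \<and> b \<in> {1..n}} = gens n"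
    by (auto simp: gens_def) force
  then show ?thesis unfolding PS_def by (simp add: generate_gens)
qed

section \<open>Deleting a strand\<close>

definition delete_word :: "nat \<Rightarrow> pb_word \<Rightarrow> pb_word" where
  "delete_word j = filter (\<lambda>((a, b), e). a \<noteq> j \<and> b \<noteq> j)"

lemma delete_word_in_words: "w \<in> pb_words n \<Longrightarrow> delete_word j w \<in> pb_words n"
  by (auto simp: delete_word_def pb_words_def)

lemma delete_word_append [simp]: "delete_word j (u @ v) = delete_word j u @ delete_word j v"
  by (simp add: delete_word_def)

lemma delete_word_pw: "delete_word j (pw a b) = (if j \<in> {a, b} then [] else pw a b)"
  by (auto simp: delete_word_def pw_def)

lemma delete_word_pwi: "delete_word j (pwi a b) = (if j \<in> {a, b} then [] else pwi a b)"
  by (auto simp: delete_word_def pwi_def)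

lemma pb_eq_delete_word_rel:
  assumes uv: "(u, v) \<in> pb_rels n"
  shows "pb_eq n (delete_word j u) (delete_word j v)"
proof -
  have words: "u \<in> pb_words n" "v \<in> pb_words n" using pb_rels_in_words[OF uv] by auto
  \<comment> \<open>only relation (C) with \<open>j = d\<close> leaves a nontrivial relation, a free cancellation\<close>
  have "delete_word j u = delete_word j v \<or> delete_word j u = u \<and> delete_word j v = v \<or>
      (\<exists>a b c. 1 \<le> a \<and> a < b \<and> b < c \<and> c \<le> n \<and>
        delete_word j u = pw a c @ pwi b c @ pw b c \<and> delete_word j v = pwi b c @ pw b c @ pw a c)"
    using uv unfolding pb_rels_def
    by (elim UnE CollectE exE conjE)
      (auto simp: delete_word_pw delete_word_pwi, metis less_imp_le_nat order_less_le_trans)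
  then consider
      (same) "delete_word j u = delete_word j v"
    | (untouched) "delete_word j u = u" "delete_word j v = v"
    | (relC) a b c where "1 \<le> a" "a < b" "b < c" "c \<le> n"
        "delete_word j u = pw a c @ pwi b c @ pw b c" "delete_word j v = pwi b c @ pw b c @ pw a c"
    by blast
  then show ?thesis
  proof cases
    case same
    then show ?thesis using words by (simp add: pb_eq.refl delete_word_in_words)
  next
    case untouched
    then show ?thesis using uv by (simp add: pb_eq.rel)
  next
    case relC
    have cancel: "pb_eq n (pwi b c @ pw b c) []" and w: "pw a c \<in> pb_words n"
      using relC by (auto intro: pb_eq_pwi_pw pw_in_words)
    have "pb_eq n (pw a c @ (pwi b c @ pw b c) @ []) (pw a c @ [] @ [])"
      by (rule pb_eq.cong[OF cancel w]) simp
    moreover have "pb_eq n ([] @ (pwi b c @ pw b c) @ pw a c) ([] @ [] @ pw a c)"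
      by (rule pb_eq.cong[OF cancel _ w]) simp
    ultimately show ?thesis
      using relC by (auto intro: pb_eq.trans pb_eq.sym)
  qed
qed

lemma pb_eq_delete_word: "pb_eq n u v \<Longrightarrow> pb_eq n (delete_word j u) (delete_word j v)"
proof (induction rule: pb_eq.induct)
  case (refl w)
  then show ?case by (simp add: delete_word_in_words pb_eq.refl)
next
  case (sym u v)
  then show ?case by (blast intro: pb_eq.sym)
next
  case (trans u v w)
  then show ?case by (blast intro: pb_eq.trans)
next
  case (cong u v x y)
  then show ?case by (simp add: pb_eq.cong delete_word_in_words)
next
  case (cancel l)
  then show ?case
    using pb_eq.cancel[of l n] by (cases l) (auto simp: delete_word_def pb_eq.refl)
next
  case (rel u v)
  then show ?case by (rule pb_eq_delete_word_rel)
qed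

definition delete_strand :: "nat \<Rightarrow> nat \<Rightarrow> pb_word set \<Rightarrow> pb_word set" where
  "delete_strand n j x = (\<Union>w\<in>x. cls n (delete_word j w))"

lemma delete_strand_cls:
  assumes "w \<in> pb_words n"
  shows "delete_strand n j (cls n w) = cls n (delete_word j w)"
proof -
  have "cls n (delete_word j w') = cls n (delete_word j w)" if "w' \<in> cls n w" for w'
    using that by (metis cls_eqI in_cls_iff pb_eq_delete_word)
  moreover have "w \<in> cls n w" using assms by (simp add: in_cls_iff pb_eq.refl)
  ultimately show ?thesis unfolding delete_strand_def by blast
qed

lemma group_hom_delete_strand: "group_hom (PB n) (PB n) (delete_strand n j)"
proof -
  have "delete_strand n j \<in> hom (PB n) (PB n)"
    by (rule homI) (auto simp: carrier_PB delete_strand_cls delete_word_in_words mult_cls)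
  then show ?thesis
    by (simp add: group_hom_def group_hom_axioms_def group_PB)
qed

lemma delete_strand_pgen:
  "1 \<le> a \<Longrightarrow> a < b \<Longrightarrow> b \<le> n \<Longrightarrow>
    delete_strand n j (pgen n a b) = (if j \<in> {a, b} then \<one>\<^bsub>PB n\<^esub> else pgen n a b)"
  by (simp add: pgen_def delete_strand_cls pw_in_words delete_word_pw one_PB)

lemma delete_strand_QS:
  assumes "x \<in> QS n {j}"
  shows "delete_strand n j x = \<one>\<^bsub>PB n\<^esub>"
proof -
  have "QS n {j} \<subseteq> kernel (PB n) (PB n) (delete_strand n j)"
    unfolding QS_def
    by (rule group.generate_subgroup_incl[OF group_PB _
          group_hom.subgroup_kernel[OF group_hom_delete_strand]])
      (auto simp: kernel_def pgen_in_carrier delete_strand_pgen)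
  with assms show ?thesis by (auto simp: kernel_def)
qed

lemma delete_strand_PS:
  assumes "x \<in> PS n ({1..n} - {j})"
  shows "delete_strand n j x = x"
proof -
  interpret group_hom "PB n" "PB n" "delete_strand n j" by (rule group_hom_delete_strand)
  let ?gens = "{pgen n a b |a b. 1 \<le> a \<and> a < b \<and> b \<le> n \<and> a \<in> {1..n} - {j} \<and> b \<in> {1..n} - {j}}"
  have "?gens \<subseteq> carrier (PB n)" by (auto intro: pgen_in_carrier)
  from assms[unfolded PS_def] this show ?thesis
  proof (induction rule: generate.induct)
    case one
    then show ?case by simp
  next
    case (incl h)
    then show ?case by (auto simp: delete_strand_pgen)
  next
    case (inv h)
    then show ?case by (auto simp: delete_strand_pgen pgen_in_carrier)
  next
    case (eng h h')
    then show ?case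
      by (simp add: generate_in_carrier[OF \<open>?gens \<subseteq> carrier (PB n)\<close>])
  qed
qed

lemma QS_inter_PS: "x \<in> QS n {j} \<Longrightarrow> x \<in> PS n ({1..n} - {j}) \<Longrightarrow> x = \<one>\<^bsub>PB n\<^esub>"
  using delete_strand_QS delete_strand_PS by metis

section \<open>Normality of Q_{j}\<close>

definition strand_gen :: "nat \<Rightarrow> nat \<Rightarrow> nat \<Rightarrow> pb_word set" where
  "strand_gen n i k = pgen n (min i k) (max i k)"

lemma strand_gen_commute: "strand_gen n i k = strand_gen n k i"
  by (simp add: strand_gen_def min.commute max.commute)

lemma strand_gen_pgen: "i < k \<Longrightarrow> strand_gen n i k = pgen n i k"
  by (simp add: strand_gen_def)

lemma triangle_conjs_ordered:
  assumes strands: "i \<in> {1..n}" "k \<in> {1..n}" "m \<in> {1..n}" "i \<noteq> k" "i \<noteq> m" "k < m"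
    and H: "subgroup H (PB n)" "strand_gen n i k \<in> H" "strand_gen n i m \<in> H"
  shows "conjs (PB n) (strand_gen n k m) (strand_gen n i k) \<subseteq> H \<and>
    conjs (PB n) (strand_gen n k m) (strand_gen n i m) \<subseteq> H"
proof -
  interpret group "PB n" by (rule group_PB)
  consider "i < k" | "k < i" "i < m" | "m < i" using strands by linarith
  then show ?thesis
  proof cases
    case 1
    then have "cyclic_triple (PB n) (pgen n i k) (pgen n i m) (pgen n k m)"
      and "pgen n i k \<in> carrier (PB n)" "pgen n i m \<in> carrier (PB n)" "pgen n k m \<in> carrier (PB n)"
      and "pgen n i k \<in> H" "pgen n i m \<in> H"
      using strands H by (auto intro: pgen_cyclic_triple pgen_in_carrier simp: strand_gen_pgen)
    from cyclic_triple_conjs[OF this(1-4) H(1) this(5,6)] show ?thesis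
      using 1 strands by (simp add: strand_gen_pgen)
  next
    case 2
    then have "cyclic_triple (PB n) (pgen n i m) (pgen n k i) (pgen n k m)"
      and "pgen n i m \<in> carrier (PB n)" "pgen n k i \<in> carrier (PB n)" "pgen n k m \<in> carrier (PB n)"
      and "pgen n i m \<in> H" "pgen n k i \<in> H"
      using strands H cyclic_triple_rotate[OF cyclic_triple_rotate[OF pgen_cyclic_triple[of k i m n]]]
      by (auto intro: pgen_in_carrier simp: strand_gen_pgen strand_gen_commute[of n i k])
    from cyclic_triple_conjs[OF this(1-4) H(1) this(5,6)] show ?thesis
      using 2 strands by (simp add: strand_gen_pgen strand_gen_commute[of n i k])
  next
    case 3
    then have "cyclic_triple (PB n) (pgen n k i) (pgen n m i) (pgen n k m)"
      and "pgen n k i \<in> carrier (PB n)" "pgen n m i \<in> carrier (PB n)" "pgen n k m \<in> carrier (PB n)"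
      and "pgen n k i \<in> H" "pgen n m i \<in> H"
      using strands H cyclic_triple_rotate[OF pgen_cyclic_triple[of k m i n]]
      by (auto intro: pgen_in_carrier simp: strand_gen_pgen strand_gen_commute[of n i])
    from cyclic_triple_conjs[OF this(1-4) H(1) this(5,6)] show ?thesis
      using 3 strands by (simp add: strand_gen_pgen strand_gen_commute[of n i])
  qed
qed

lemma triangle_conjs:
  assumes strands: "i \<in> {1..n}" "k \<in> {1..n}" "m \<in> {1..n}" "i \<noteq> k" "i \<noteq> m" "k \<noteq> m"
    and H: "subgroup H (PB n)" "strand_gen n i k \<in> H" "strand_gen n i m \<in> H"
  shows "conjs (PB n) (strand_gen n k m) (strand_gen n i k) \<subseteq> H"
proof (cases "k < m")
  case True
  then show ?thesis using triangle_conjs_ordered[OF strands(1-5) True H] by blast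
next
  case False
  then have "m < k" using strands by simp
  then show ?thesis
    using triangle_conjs_ordered[OF strands(1,3,2,5,4) _ H(1,3,2)] by (simp add: strand_gen_commute)
qed

lemma interleaved_conjs_QS:
  assumes abcd: "1 \<le> a" "a < b" "b < c" "c < d" "d \<le> n"
  shows "j \<in> {a, c} \<Longrightarrow> conjs (PB n) (pgen n b d) (pgen n a c) \<subseteq> QS n {j}"
    and "j \<in> {b, d} \<Longrightarrow> conjs (PB n) (pgen n a c) (pgen n b d) \<subseteq> QS n {j}"
proof -
  interpret group "PB n" by (rule group_PB)
  have "pgen n a b \<in> carrier (PB n)" "pgen n a c \<in> carrier (PB n)" "pgen n b c \<in> carrier (PB n)"
    "pgen n a d \<in> carrier (PB n)" "pgen n b d \<in> carrier (PB n)" "pgen n c d \<in> carrier (PB n)"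
    and "cyclic_triple (PB n) (pgen n a b) (pgen n a c) (pgen n b c)"
    "cyclic_triple (PB n) (pgen n a b) (pgen n a d) (pgen n b d)"
    "cyclic_triple (PB n) (pgen n a c) (pgen n a d) (pgen n c d)"
    "cyclic_triple (PB n) (pgen n b c) (pgen n b d) (pgen n c d)"
    using abcd by (auto intro: pgen_in_carrier pgen_cyclic_triple)
  note relations = this pgen_commute_disjoint[OF abcd] pgen_commute_nested[OF abcd]
    pgen_relation_C[OF abcd]
  show "conjs (PB n) (pgen n b d) (pgen n a c) \<subseteq> QS n {j}" if "j \<in> {a, c}"
  proof (cases "j = a")
    case True
    then show ?thesis
      by (intro interleaved_strand_a[OF relations subgroup_QS]) (use abcd in \<open>auto intro: pgen_in_QS\<close>)
  next
    case False
    with that show ?thesis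
      by (intro interleaved_strand_c[OF relations subgroup_QS]) (use abcd in \<open>auto intro: pgen_in_QS\<close>)
  qed
  show "conjs (PB n) (pgen n a c) (pgen n b d) \<subseteq> QS n {j}" if "j \<in> {b, d}"
  proof (cases "j = b")
    case True
    then show ?thesis
      by (intro interleaved_strand_b[OF relations subgroup_QS]) (use abcd in \<open>auto intro: pgen_in_QS\<close>)
  next
    case False
    with that show ?thesis
      by (intro interleaved_strand_d[OF relations subgroup_QS]) (use abcd in \<open>auto intro: pgen_in_QS\<close>)
  qed
qed

lemma pgen_conjs_QS:
  assumes ab: "1 \<le> a" "a < b" "b \<le> n" and cd: "1 \<le> c" "c < d" "d \<le> n"
    and j: "j \<in> {a, b}" "j \<notin> {c, d}"
  shows "conjs (PB n) (pgen n c d) (pgen n a b) \<subseteq> QS n {j}"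
proof -
  interpret group "PB n" by (rule group_PB)
  have ab_in_QS: "pgen n a b \<in> QS n {j}" using ab j(1) by (rule pgen_in_QS)
  consider (shared) "c = a \<or> c = b \<or> d = a \<or> d = b"
    | (commuting) "b < c \<or> d < a \<or> a < c \<and> d < b \<or> c < a \<and> b < d"
    | (interleaved) "a < c" "c < b" "b < d" | (interleaved') "c < a" "a < d" "d < b"
    using ab cd by linarith
  then show ?thesis
  proof cases
    case shared
    \<comment> \<open>the strands j, k, m of the two generators span a triangle whose third side passes through j\<close>
    define k where "k = (if j = a then b else a)"
    define m where "m = (if k = c then d else c)"
    have "pgen n a b = strand_gen n j k" "pgen n c d = strand_gen n k m"
      using ab cd j shared by (auto simp: k_def m_def strand_gen_def)
    moreover have "strand_gen n j m \<in> QS n {j}"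
      using ab cd j shared by (auto simp: k_def m_def strand_gen_def intro: pgen_in_QS)
    ultimately show ?thesis
      using triangle_conjs[of j n k m "QS n {j}"] ab cd j shared ab_in_QS subgroup_QS
      by (auto simp: k_def m_def)
  next
    case commuting
    then have "pgen n c d \<otimes>\<^bsub>PB n\<^esub> pgen n a b = pgen n a b \<otimes>\<^bsub>PB n\<^esub> pgen n c d"
      using ab cd pgen_commute_disjoint[of a b c d n] pgen_commute_disjoint[of c d a b n]
        pgen_commute_nested[of a c d b n] pgen_commute_nested[of c a b d n]
      by auto
    then show ?thesis
      using ab cd ab_in_QS by (simp add: conjs_commuting pgen_in_carrier)
  next
    case interleaved
    then show ?thesis using interleaved_conjs_QS(1)[of a c b d n j] ab cd j by simp
  next
    case interleaved'
    then show ?thesis using interleaved_conjs_QS(2)[of c a d b n j] ab cd j by simp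
  qed
qed

lemma normal_QS: "QS n {j} \<lhd> PB n"
proof -
  interpret group "PB n" by (rule group_PB)
  let ?S = "{pgen n a b |a b. 1 \<le> a \<and> a < b \<and> b \<le> n \<and> (a \<in> {j} \<or> b \<in> {j})}"
  have "pgen n c d \<in> normalizing (PB n) (QS n {j})" if cd: "1 \<le> c" "c < d" "d \<le> n" for c d
  proof (cases "j \<in> {c, d}")
    case True
    then show ?thesis
      using cd pgen_in_QS subgroup_subset_normalizing[OF subgroup_QS] by blast
  next
    case False
    show ?thesis
      unfolding QS_def
    proof (rule normalizing_generateI)
      show "?S \<subseteq> carrier (PB n)" by (auto intro: pgen_in_carrier)
      show "pgen n c d \<in> carrier (PB n)" using cd by (rule pgen_in_carrier)
      fix s assume "s \<in> ?S"
      then show "conjs (PB n) (pgen n c d) s \<subseteq> generate (PB n) ?S"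
        using pgen_conjs_QS[OF _ _ _ cd _ False] by (auto simp: QS_def)
    qed
  qed
  then have "gens n \<subseteq> normalizing (PB n) (QS n {j})"
    by (auto simp: gens_def)
  then show ?thesis
    by (rule normal_if_generators_normalizing[OF subgroup_QS _ generate_gens])
qed

section \<open>Monic commutators and Brunnian braids\<close>

lemma monic_in_carrier: "x \<in> monic n \<Longrightarrow> x \<in> carrier (PB n)"
proof (induction rule: monic.induct)
  case (gen a b)
  then show ?case by (rule pgen_in_carrier)
next
  case (gen_inv a b)
  then show ?case by (simp add: group.inv_closed[OF group_PB] pgen_in_carrier)
next
  case (comm x y)
  then show ?case by (simp add: group.commut_closed[OF group_PB])
qed

lemma inv_monic: "x \<in> monic n \<Longrightarrow> inv\<^bsub>PB n\<^esub> x \<in> monic n"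
proof (induction rule: monic.induct)
  case (gen a b)
  then show ?case by (rule monic.gen_inv)
next
  case (gen_inv a b)
  then show ?case by (simp add: group.inv_inv[OF group_PB] pgen_in_carrier monic.gen)
next
  case (comm x y)
  interpret group "PB n" by (rule group_PB)
  have carrier: "x \<in> carrier (PB n)" "y \<in> carrier (PB n)"
    using comm.hyps(1,2) by (simp_all add: monic_in_carrier)
  then have "inv\<^bsub>PB n\<^esub> (commut (PB n) x y) = commut (PB n) y x" by (rule inv_commut)
  moreover from this have "commut (PB n) y x \<noteq> \<one>\<^bsub>PB n\<^esub>"
    using comm.hyps(3) carrier by (metis commut_closed inv_eq_1_iff)
  ultimately show ?case using monic.comm[OF comm.hyps(2,1)] by simp
qed

lemma generate_monic: "generate (PB n) (monic n) = carrier (PB n)"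
proof -
  interpret group "PB n" by (rule group_PB)
  have "gens n \<subseteq> monic n" by (auto simp: gens_def intro: monic.gen)
  then have "carrier (PB n) \<subseteq> generate (PB n) (monic n)"
    using mono_generate generate_gens by blast
  moreover have "generate (PB n) (monic n) \<subseteq> carrier (PB n)"
    by (rule generate_incl) (auto intro: monic_in_carrier)
  ultimately show ?thesis by blast
qed

lemma monic_in_QS_or_PS: "x \<in> monic n \<Longrightarrow> x \<in> QS n {j} \<or> x \<in> PS n ({1..n} - {j})"
proof (induction rule: monic.induct)
  case (gen a b)
  then show ?case by (cases "j \<in> {a, b}") (auto intro: pgen_in_QS pgen_in_PS)
next
  case (gen_inv a b)
  then have "pgen n a b \<in> QS n {j} \<or> pgen n a b \<in> PS n ({1..n} - {j})"
    by (cases "j \<in> {a, b}") (auto intro: pgen_in_QS pgen_in_PS)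
  then show ?case
    using subgroup.m_inv_closed[OF subgroup_QS] subgroup.m_inv_closed[OF subgroup_PS] by blast
next
  case (comm x y)
  interpret group "PB n" by (rule group_PB)
  have carrier: "x \<in> carrier (PB n)" "y \<in> carrier (PB n)"
    using comm.hyps(1,2) by (simp_all add: monic_in_carrier)
  from comm.IH consider "x \<in> QS n {j} \<or> y \<in> QS n {j}" | "x \<in> PS n ({1..n} - {j})" "y \<in> PS n ({1..n} - {j})"
    by blast
  then show ?case
  proof cases
    case 1
    then show ?thesis using commut_in_normal[OF normal_QS carrier] by blast
  next
    case 2
    then show ?thesis using commut_in_subgroup[OF subgroup_PS] by blast
  qed
qed

definition monic_on :: "nat \<Rightarrow> nat set \<Rightarrow> pb_word set set" where
  "monic_on n T = {x \<in> monic n. \<forall>i\<in>T. x \<in> QS n {i}}"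

definition brunnian_on :: "nat \<Rightarrow> nat set \<Rightarrow> pb_word set set" where
  "brunnian_on n T = {x \<in> carrier (PB n). \<forall>i\<in>T. x \<in> QS n {i}}"

lemma monic_on_subset_carrier: "monic_on n T \<subseteq> carrier (PB n)"
  by (auto simp: monic_on_def monic_in_carrier)

lemma subgroup_brunnian_on: "subgroup (brunnian_on n T) (PB n)"
proof -
  interpret group "PB n" by (rule group_PB)
  show ?thesis
    unfolding brunnian_on_def
    by (rule subgroupI)
      (auto intro: subgroup.m_closed[OF subgroup_QS] subgroup.m_inv_closed[OF subgroup_QS]
        intro!: exI[of _ "\<one>\<^bsub>PB n\<^esub>"] subgroup.one_closed[OF subgroup_QS])
qed

lemma generate_monic_on_subset: "generate (PB n) (monic_on n T) \<subseteq> brunnian_on n T"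
  by (rule group.generate_subgroup_incl[OF group_PB _ subgroup_brunnian_on])
    (auto simp: monic_on_def brunnian_on_def monic_in_carrier)

lemma conj_monic_on_in_generate:
  assumes y: "y \<in> monic n" and m: "m \<in> monic_on n T"
  shows "inv\<^bsub>PB n\<^esub> y \<otimes>\<^bsub>PB n\<^esub> m \<otimes>\<^bsub>PB n\<^esub> y \<in> generate (PB n) (monic_on n T)"
proof -
  interpret group "PB n" by (rule group_PB)
  have carrier: "y \<in> carrier (PB n)" "m \<in> carrier (PB n)"
    using y m by (auto simp: monic_on_def monic_in_carrier)
  have "commut (PB n) m y \<in> generate (PB n) (monic_on n T)"
  proof (cases "commut (PB n) m y = \<one>\<^bsub>PB n\<^esub>")
    case True
    then show ?thesis by (simp add: generate.one)
  next
    case False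
    then have "commut (PB n) m y \<in> monic n"
      using m y by (auto simp: monic_on_def intro: monic.comm)
    moreover have "commut (PB n) m y \<in> QS n {i}" if "i \<in> T" for i
      using that m carrier commut_in_normal[OF normal_QS] by (auto simp: monic_on_def)
    ultimately show ?thesis by (auto simp: monic_on_def intro: generate.incl)
  qed
  moreover have "m \<in> generate (PB n) (monic_on n T)" using m by (rule generate.incl)
  ultimately show ?thesis
    using carrier by (simp add: inv_conj_eq_mult_commut generate.eng)
qed

lemma normal_generate_monic_on: "generate (PB n) (monic_on n T) \<lhd> PB n"
proof -
  interpret group "PB n" by (rule group_PB)
  have "monic n \<subseteq> normalizing (PB n) (generate (PB n) (monic_on n T))"
  proof
    fix y assume y: "y \<in> monic n"
    show "y \<in> normalizing (PB n) (generate (PB n) (monic_on n T))"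
    proof (rule normalizing_generateI[OF monic_on_subset_carrier monic_in_carrier[OF y]])
      fix m assume "m \<in> monic_on n T"
      then show "conjs (PB n) y m \<subseteq> generate (PB n) (monic_on n T)"
        using conj_monic_on_in_generate[OF y] conj_monic_on_in_generate[OF inv_monic[OF y]]
          monic_in_carrier[OF y]
        by (simp add: conjs_def)
    qed
  qed
  then show ?thesis
    by (rule normal_if_generators_normalizing[OF generate_is_subgroup[OF monic_on_subset_carrier] _
          generate_monic])
qed

lemma generate_monic_on_subset_set_mult:
  "generate (PB n) (monic_on n T) \<subseteq>
    generate (PB n) (monic_on n (insert j T)) <#>\<^bsub>PB n\<^esub> PS n ({1..n} - {j})"
  (is "_ \<subseteq> ?H <#>\<^bsub>PB n\<^esub> ?P")
proof -
  interpret group "PB n" by (rule group_PB)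
  have mult_in: "h \<otimes>\<^bsub>PB n\<^esub> p \<in> ?H <#>\<^bsub>PB n\<^esub> ?P" if "h \<in> ?H" "p \<in> ?P" for h p
    using that unfolding set_mult_def by blast
  have "second_isomorphism_grp ?H (PB n) ?P"
    by (rule second_isomorphism_grp.intro[OF normal_generate_monic_on
          second_isomorphism_grp_axioms.intro[OF subgroup_PS]])
  then have "subgroup (?H <#>\<^bsub>PB n\<^esub> ?P) (PB n)"
    by (rule second_isomorphism_grp.normal_set_mult_subgroup)
  moreover have "monic_on n T \<subseteq> ?H <#>\<^bsub>PB n\<^esub> ?P"
  proof
    fix x assume x: "x \<in> monic_on n T"
    then have carrier: "x \<in> carrier (PB n)" using monic_on_subset_carrier by blast
    from x have "x \<in> QS n {j} \<or> x \<in> ?P"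
      using monic_in_QS_or_PS by (auto simp: monic_on_def)
    then show "x \<in> ?H <#>\<^bsub>PB n\<^esub> ?P"
    proof
      assume "x \<in> QS n {j}"
      with x have "x \<in> ?H" by (auto simp: monic_on_def intro: generate.incl)
      from mult_in[OF this subgroup.one_closed[OF subgroup_PS]] show ?thesis
        using carrier by simp
    next
      assume "x \<in> ?P"
      from mult_in[OF generate.one this] show ?thesis
        using carrier by simp
    qed
  qed
  ultimately show ?thesis by (intro generate_subgroup_incl)
qed

lemma QS_inter_set_mult_PS:
  assumes H: "H \<subseteq> QS n {j}" and x: "x \<in> QS n {j}" "x \<in> H <#>\<^bsub>PB n\<^esub> PS n ({1..n} - {j})"
  shows "x \<in> H"
proof -
  interpret group "PB n" by (rule group_PB)
  obtain h p where hp: "h \<in> H" "p \<in> PS n ({1..n} - {j})" "x = h \<otimes>\<^bsub>PB n\<^esub> p"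
    using x(2) unfolding set_mult_def by blast
  have carrier: "h \<in> carrier (PB n)" "p \<in> carrier (PB n)"
    using hp(1,2) H subgroup.mem_carrier[OF subgroup_QS] subgroup.mem_carrier[OF subgroup_PS]
    by auto
  \<comment> \<open>deleting strand \<open>j\<close> kills \<open>x\<close> and \<open>h\<close> but fixes \<open>p\<close>\<close>
  have "\<one>\<^bsub>PB n\<^esub> = delete_strand n j x"
    using x(1) by (simp add: delete_strand_QS)
  also have "\<dots> = delete_strand n j h \<otimes>\<^bsub>PB n\<^esub> delete_strand n j p"
    using hp(3) carrier group_hom.hom_mult[OF group_hom_delete_strand] by simp
  also have "\<dots> = p"
    using hp(1) H delete_strand_PS[OF hp(2)] carrier by (auto simp: delete_strand_QS)
  finally have "p = \<one>\<^bsub>PB n\<^esub>" by simp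
  then show ?thesis
    using hp carrier by simp
qed

theorem brunnian_on_eq_generate_monic_on:
  assumes "finite T"
  shows "brunnian_on n T = generate (PB n) (monic_on n T)"
  using assms
proof (induction T rule: finite_induct)
  case empty
  then show ?case by (simp add: brunnian_on_def monic_on_def generate_monic)
next
  case (insert j T)
  have H_QS: "generate (PB n) (monic_on n (insert j T)) \<subseteq> QS n {j}"
    using generate_monic_on_subset[of n "insert j T"] by (auto simp: brunnian_on_def)
  have "brunnian_on n (insert j T) \<subseteq> generate (PB n) (monic_on n (insert j T))"
  proof
    fix x assume x: "x \<in> brunnian_on n (insert j T)"
    then have "x \<in> generate (PB n) (monic_on n T)"
      using insert.IH by (auto simp: brunnian_on_def)
    then have "x \<in> generate (PB n) (monic_on n (insert j T)) <#>\<^bsub>PB n\<^esub> PS n ({1..n} - {j})"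
      using generate_monic_on_subset_set_mult by blast
    moreover have "x \<in> QS n {j}" using x by (simp add: brunnian_on_def)
    ultimately show "x \<in> generate (PB n) (monic_on n (insert j T))"
      using QS_inter_set_mult_PS[OF H_QS] by blast
  qed
  then show ?case
    using generate_monic_on_subset by (rule subset_antisym)
qed

section \<open>Support\<close>

lemma supp_subset: "x \<in> PS n S \<Longrightarrow> S \<subseteq> {1..n} \<Longrightarrow> supp n x \<subseteq> S"
  unfolding supp_def by (rule Inter_lower) simp

lemma QS_if_supp_all:
  assumes "x \<in> monic n" "supp n x = {1..n}" "i \<in> {1..n}"
  shows "x \<in> QS n {i}"
proof (rule ccontr)
  assume "x \<notin> QS n {i}"
  then have "x \<in> PS n ({1..n} - {i})" using monic_in_QS_or_PS[OF assms(1)] by blast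
  then have "supp n x \<subseteq> {1..n} - {i}" by (rule supp_subset) blast
  with assms(2,3) show False by blast
qed

lemma supp_all_if_QS:
  assumes x: "x \<in> carrier (PB n)" "x \<noteq> \<one>\<^bsub>PB n\<^esub>" and QS: "\<And>i. i \<in> {1..n} \<Longrightarrow> x \<in> QS n {i}"
  shows "supp n x = {1..n}"
proof
  show "supp n x \<subseteq> {1..n}" using x(1) PS_all supp_subset by blast
  show "{1..n} \<subseteq> supp n x"
    unfolding supp_def
  proof (intro subsetI InterI)
    fix i S assume i: "i \<in> {1..n}" and S: "S \<in> {S. S \<subseteq> {1..n} \<and> x \<in> PS n S}"
    show "i \<in> S"
    proof (rule ccontr)
      assume "i \<notin> S"
      with S have "S \<subseteq> {1..n} - {i}" by blast
      with S have "x \<in> PS n ({1..n} - {i})" using PS_mono by blast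
      with QS[OF i] x(2) show False using QS_inter_PS by blast
    qed
  qed
qed

lemma generate_monic_on_all_eq_full_support:
  "generate (PB n) (monic_on n {1..n}) = generate (PB n) {x \<in> monic n. supp n x = {1..n}}"
  (is "_ = generate (PB n) ?M")
proof -
  interpret group "PB n" by (rule group_PB)
  have "?M \<subseteq> monic_on n {1..n}"
    unfolding monic_on_def using QS_if_supp_all by blast
  then have lower: "generate (PB n) ?M \<subseteq> generate (PB n) (monic_on n {1..n})"
    by (rule mono_generate)
  have "monic_on n {1..n} \<subseteq> insert \<one>\<^bsub>PB n\<^esub> ?M"
  proof
    fix x assume "x \<in> monic_on n {1..n}"
    then show "x \<in> insert \<one>\<^bsub>PB n\<^esub> ?M"
      using supp_all_if_QS[OF monic_in_carrier] unfolding monic_on_def by blast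
  qed
  then have "generate (PB n) (monic_on n {1..n}) \<subseteq> generate (PB n) (insert \<one>\<^bsub>PB n\<^esub> ?M)"
    by (rule mono_generate)
  also have "\<dots> = generate (PB n) ?M"
    by (rule generate_insert_one) (auto intro: monic_in_carrier)
  finally show ?thesis
    using lower by (rule subset_antisym)
qed

theorem corollary2p3:
  shows "brunnian n = generate (PB n) {x \<in> monic n. supp n x = {1..n}}"
proof -
  have "brunnian n = brunnian_on n {1..n}"
    by (simp add: brunnian_def brunnian_on_def)
  also have "\<dots> = generate (PB n) (monic_on n {1..n})"
    by (rule brunnian_on_eq_generate_monic_on) simp
  also have "\<dots> = generate (PB n) {x \<in> monic n. supp n x = {1..n}}"
    by (rule generate_monic_on_all_eq_full_support)
  finally show ?thesis .
qed

end
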